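(* In the setting described in the context, for every edge state $\mathcal S=(S,\ell)$ with $S\subseteq I\times E$ and $\ell\in\{0,\dots,K\}^E$, the set $\Lambda(\mathcal S)=\{\lambda\ge0:\mathcal S(\lambda)=\mathcal S\}$ is convex.
   Context: Let $G=(V,E)$ be a directed graph and $I$ a finite set of commodities; commodity $i$ has source $s_i$, sink $t_i$, demand $d_i>0$. Flows are $x=(x_{i,e})\in\mathbb{R}^{I\times E}_{\ge0}$, feasible if for each $i$ they form an $s_i$–$t_i$ flow of value $d_i$; edge loads $x_e=\sum_ix_{i,e}$. The cost of edge $e$ under price $\lambda\ge0$ is $c^\lambda_e(x_e)=a_{e,k}x_e+b_{e,k}+g_e\lambda$ for $x_e\in[\sigma_{e,k},\sigma_{e,k+1})$, $k\in\{0,\dots,K\}$, with $0=\sigma_{e,0}<\dots<\sigma_{e,K}<\sigma_{e,K+1}=\infty$, $a_{e,k}>0$, $b_{e,k}\ge0$, $g_e\ge0$, such that $c^\lambda_e$ is continuous and strictly increasing; path costs are sums of edge costs; $\mathrm{WE}(\lambda)$ is the set of Wardrop equilibria (feasible flows using only minimum-cost paths per commodity). For each $\lambda$ the equilibrium edge loads $x_e$ are unique. Let $\phi_{i,v}(\lambda)$ be the length of a shortest $s_i$–$v$ path w.r.t. edge lengths $c^\lambda_e(x_e)$ for equilibrium loads $x_e$. The active support is $S(\lambda)=\{(i,e)\in I\times E: e=vw,\ c^\lambda_e(x_e)=\phi_{i,w}(\lambda)-\phi_{i,v}(\lambda)\}$, the vector of active function parts $\ell(\lambda)\in\{0,\dots,K\}^E$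 has $\ell_e$ the index with $x_e\in[\sigma_{e,\ell_e},\sigma_{e,\ell_e+1})$, and the edge state is $\mathcal S(\lambda)=(S(\lambda),\ell(\lambda))$. *)

theory Defs
  imports "HOL-Analysis.Analysis"
begin

record ('v, 'i) network =
  verts :: "'v set"
  edges :: "('v \<times> 'v) set"
  comms :: "'i set"
  src   :: "'i \<Rightarrow> 'v"
  snk   :: "'i \<Rightarrow> 'v"
  dem   :: "'i \<Rightarrow> real"
  npieces :: nat
  brk   :: "('v \<times> 'v) \<Rightarrow> nat \<Rightarrow> real"
  slope :: "('v \<times> 'v) \<Rightarrow> nat \<Rightarrow> real"
  offs  :: "('v \<times> 'v) \<Rightarrow> nat \<Rightarrow> real"
  pcoef :: "('v \<times> 'v) \<Rightarrow> real"

definition piece :: "('v, 'i) network \<Rightarrow> ('v \<times> 'v) \<Rightarrow> real \<Rightarrow> nat" where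
  "piece N e y = (THE k. k \<le> npieces N \<and> brk N e k \<le> y \<and>
                         (k < npieces N \<longrightarrow> y < brk N e (Suc k)))"

definition cost :: "('v, 'i) network \<Rightarrow> real \<Rightarrow> ('v \<times> 'v) \<Rightarrow> real \<Rightarrow> real" where
  "cost N lam e y = (let k = piece N e y in slope N e k * y + offs N e k + pcoef N e * lam)"

definition is_path :: "('v \<times> 'v) set \<Rightarrow> 'v \<Rightarrow> 'v \<Rightarrow> ('v \<times> 'v) list \<Rightarrow> bool" where
  "is_path E u v P \<longleftrightarrow> (\<exists>vs. length vs = Suc (length P) \<and> hd vs = u \<and> last vs = v \<and>
      distinct vs \<and> (\<forall>k < length P. P ! k = (vs ! k, vs ! Suc k)) \<and> set P \<subseteq> E)"

definition paths :: "('v \<times> 'v) set \<Rightarrow> 'v \<Rightarrow> 'v \<Rightarrow> ('v \<times> 'v) list set" where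
  "paths E u v = {P. is_path E u v P}"

definition path_cost :: "(('v \<times> 'v) \<Rightarrow> real) \<Rightarrow> ('v \<times> 'v) list \<Rightarrow> real" where
  "path_cost c P = sum_list (map c P)"

definition load :: "('v, 'i) network \<Rightarrow> ('i \<Rightarrow> ('v \<times> 'v) \<Rightarrow> real) \<Rightarrow> ('v \<times> 'v) \<Rightarrow> real" where
  "load N x e = (\<Sum>i\<in>comms N. x i e)"

definition feasible :: "('v, 'i) network \<Rightarrow> ('i \<Rightarrow> ('v \<times> 'v) \<Rightarrow> real) \<Rightarrow> bool" where
  "feasible N x \<longleftrightarrow>
     (\<forall>i\<in>comms N. \<forall>e\<in>edges N. x i e \<ge> 0) \<and>
     (\<forall>i\<in>comms N. \<forall>v\<in>verts N.
        (\<Sum>e\<in>{e\<in>edges N. fst e = v}. x i e) - (\<Sum>e\<in>{e\<in>edges N. snd e = v}. x i e)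
        = (if v = src N i then dem N i else 0) - (if v = snk N i then dem N i else 0))"

definition wardrop :: "('v, 'i) network \<Rightarrow> real \<Rightarrow> ('i \<Rightarrow> ('v \<times> 'v) \<Rightarrow> real) \<Rightarrow> bool" where
  "wardrop N lam x \<longleftrightarrow> feasible N x \<and>
     (\<forall>i\<in>comms N. \<exists>f :: ('v \<times> 'v) list \<Rightarrow> real.
        (\<forall>P\<in>paths (edges N) (src N i) (snk N i). f P \<ge> 0) \<and>
        (\<forall>e\<in>edges N. x i e = (\<Sum>P\<in>paths (edges N) (src N i) (snk N i).
                                   if e \<in> set P then f P else 0)) \<and>
        (\<forall>P\<in>paths (edges N) (src N i) (snk N i). f P > 0 \<longrightarrow>
           (\<forall>Q\<in>paths (edges N) (src N i) (snk N i).
              path_cost (\<lambda>e. cost N lam e (load N x e)) P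
              \<le> path_cost (\<lambda>e. cost N lam e (load N x e)) Q)))"

text \<open>Equilibrium edge loads (well defined when equilibria exist and loads are unique).\<close>
definition eq_load :: "('v, 'i) network \<Rightarrow> real \<Rightarrow> ('v \<times> 'v) \<Rightarrow> real" where
  "eq_load N lam = load N (SOME x. wardrop N lam x)"

text \<open>phi_{i,v}(lam): shortest s_i-v path length (infinity if v unreachable).\<close>
definition phi :: "('v, 'i) network \<Rightarrow> real \<Rightarrow> 'i \<Rightarrow> 'v \<Rightarrow> ereal" where
  "phi N lam i v = (INF P\<in>paths (edges N) (src N i) v.
                      ereal (path_cost (\<lambda>e. cost N lam e (eq_load N lam e)) P))"

definition active_support :: "('v, 'i) network \<Rightarrow> real \<Rightarrow> ('i \<times> ('v \<times> 'v)) set" where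
  "active_support N lam = {(i, e). i \<in> comms N \<and> e \<in> edges N \<and>
      phi N lam i (snd e) = phi N lam i (fst e) + ereal (cost N lam e (eq_load N lam e))}"

definition active_parts :: "('v, 'i) network \<Rightarrow> real \<Rightarrow> ('v \<times> 'v) \<Rightarrow> nat" where
  "active_parts N lam = (\<lambda>e. if e \<in> edges N then piece N e (eq_load N lam e) else 0)"

definition edge_state :: "('v, 'i) network \<Rightarrow> real \<Rightarrow> ('i \<times> ('v \<times> 'v)) set \<times> (('v \<times> 'v) \<Rightarrow> nat)" where
  "edge_state N lam = (active_support N lam, active_parts N lam)"

end

theory Submission
  imports Defs
begin

text \<open>Let \<open>a\<close> and \<open>b\<close> be prices with the same edge state, with Wardrop equilibria \<open>x\<^sub>a\<close>
  and \<open>x\<^sub>b\<close>, and let \<open>\<lambda> = u a + v b\<close> be a convex combination. On every edge both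
  equilibrium loads lie on the same affine piece of the cost function, so at price \<open>\<lambda>\<close> the
  flow \<open>u x\<^sub>a + v x\<^sub>b\<close> induces the edge costs \<open>u c\<^sub>a + v c\<^sub>b\<close>. Equal active supports say
  that \<open>c\<^sub>a\<close> and \<open>c\<^sub>b\<close> have the same tight edges (edges on which the shortest-path distance
  from a source grows by exactly the edge cost). A path is shortest iff all its edges are tight,
  so a path used by \<open>x\<^sub>a\<close> or \<open>x\<^sub>b\<close> is shortest for both cost vectors and hence for their
  combination: the combined flow is a Wardrop equilibrium at \<open>\<lambda>\<close>. Its shortest-path distances
  are the same combination of those at \<open>a\<close> and \<open>b\<close>, and since the tightness gaps of \<open>c\<^sub>a\<close>
  and \<open>c\<^sub>b\<close> are nonpositive and vanish together, the tight edges at \<open>\<lambda>\<close> are again the same.\<close>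

section \<open>Simple paths\<close>

definition path_through :: "('v \<times> 'v) set \<Rightarrow> 'v \<Rightarrow> 'v \<Rightarrow> ('v \<times> 'v) list \<Rightarrow> 'v list \<Rightarrow> bool" where
  "path_through E u v P vs \<longleftrightarrow> length vs = Suc (length P) \<and> hd vs = u \<and> last vs = v \<and>
      distinct vs \<and> (\<forall>k < length P. P ! k = (vs ! k, vs ! Suc k)) \<and> set P \<subseteq> E"

lemma paths_iff_path_through: "P \<in> paths E u v \<longleftrightarrow> (\<exists>vs. path_through E u v P vs)"
  unfolding paths_def is_path_def path_through_def by simp

lemma path_through_first: "path_through E u v P vs \<Longrightarrow> vs ! 0 = u"
  unfolding path_through_def by (metis hd_conv_nth list.size(3) nat.distinct(1))

lemma path_through_last: "path_through E u v P vs \<Longrightarrow> vs ! length P = v"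
  unfolding path_through_def by (metis diff_Suc_1 last_conv_nth list.size(3) nat.distinct(1))

lemma path_through_edge:
  assumes "path_through E u v P vs" "k < length P"
  shows "P ! k = (vs ! k, vs ! Suc k)" "P ! k \<in> E"
  using assms nth_mem[OF assms(2)] unfolding path_through_def by blast+

lemma path_through_take:
  assumes "path_through E u v P vs" "k \<le> length P"
  shows "path_through E u (vs ! k) (take k P) (take (Suc k) vs)"
proof -
  have "length vs = Suc (length P)" using assms unfolding path_through_def by simp
  moreover from this have "last (take (Suc k) vs) = vs ! k"
    using assms(2) by (subst last_conv_nth) auto
  ultimately show ?thesis
    using assms unfolding path_through_def
    by (auto simp: hd_take min_def nth_take dest: subsetD[OF set_take_subset])
qed

lemma path_through_snoc:
  assumes "path_through E u v P vs" "(v, w) \<in> E" "w \<notin> set vs"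
  shows "path_through E u w (P @ [(v, w)]) (vs @ [w])"
proof -
  have "vs \<noteq> []" using assms(1) unfolding path_through_def by auto
  then have "(P @ [(v, w)]) ! k = ((vs @ [w]) ! k, (vs @ [w]) ! Suc k)" if "k < Suc (length P)" for k
    using assms(1) that unfolding path_through_def by (auto simp: nth_append last_conv_nth less_Suc_eq)
  then show ?thesis using assms \<open>vs \<noteq> []\<close> unfolding path_through_def by auto
qed

lemma path_through_distinct_edges: "path_through E u v P vs \<Longrightarrow> distinct P"
  unfolding path_through_def distinct_conv_nth by (metis Suc_inject Suc_mono prod.inject)

lemma paths_subset: "P \<in> paths E u v \<Longrightarrow> set P \<subseteq> E"
  by (auto simp: paths_iff_path_through path_through_def)

lemma paths_self: "paths E s s = {[]}"
proof -
  have "P = []" if "path_through E s s P vs" for P vs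
  proof (rule ccontr)
    assume "P \<noteq> []"
    then have "0 < length P" by simp
    moreover have "vs ! 0 = vs ! length P"
      using path_through_first[OF that] path_through_last[OF that] by simp
    ultimately show False
      using that unfolding path_through_def by (simp add: nth_eq_iff_index_eq)
  qed
  moreover have "path_through E s s [] [s]" unfolding path_through_def by simp
  ultimately show ?thesis by (auto simp: paths_iff_path_through)
qed

lemma finite_paths:
  assumes "finite E"
  shows "finite (paths E u v)"
proof -
  have "paths E u v \<subseteq> {P. set P \<subseteq> E \<and> length P \<le> card E}"
  proof
    fix P assume "P \<in> paths E u v"
    then have "distinct P" "set P \<subseteq> E"
      by (auto simp: paths_iff_path_through path_through_def intro: path_through_distinct_edges)
    then show "P \<in> {P. set P \<subseteq> E \<and> length P \<le> card E}"
      using assms by (metis card_mono distinct_card mem_Collect_eq)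
  qed
  then show ?thesis using finite_lists_length_le[OF assms] finite_subset by blast
qed

section \<open>Shortest-path distances and tight edges\<close>

lemma path_cost_append: "path_cost c (P @ Q) = path_cost c P + path_cost c Q"
  by (simp add: path_cost_def)

lemma path_cost_nonneg: "(\<And>e. e \<in> set P \<Longrightarrow> 0 \<le> c e) \<Longrightarrow> 0 \<le> path_cost c P"
  unfolding path_cost_def by (rule sum_list_nonneg) auto

lemma path_cost_linear_combination:
  assumes "set P \<subseteq> E" "\<forall>e\<in>E. c e = u * c1 e + v * c2 e"
  shows "path_cost c P = u * path_cost c1 P + v * path_cost c2 P"
  using assms by (induction P) (auto simp: path_cost_def algebra_simps)

definition shortest_dist :: "('v \<times> 'v) set \<Rightarrow> (('v \<times> 'v) \<Rightarrow> real) \<Rightarrow> 'v \<Rightarrow> 'v \<Rightarrow> ereal" where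
  "shortest_dist E c s v = (INF P\<in>paths E s v. ereal (path_cost c P))"

lemma shortest_dist_le: "P \<in> paths E s v \<Longrightarrow> shortest_dist E c s v \<le> ereal (path_cost c P)"
  unfolding shortest_dist_def by (rule INF_lower)

lemma shortest_dist_self: "shortest_dist E c s s = 0"
  unfolding shortest_dist_def paths_self path_cost_def by (simp add: zero_ereal_def)

lemma shortest_dist_eq_iff:
  assumes "P \<in> paths E s v"
  shows "shortest_dist E c s v = ereal (path_cost c P) \<longleftrightarrow>
         (\<forall>Q\<in>paths E s v. path_cost c P \<le> path_cost c Q)"
proof
  assume "shortest_dist E c s v = ereal (path_cost c P)"
  then show "\<forall>Q\<in>paths E s v. path_cost c P \<le> path_cost c Q"
    using shortest_dist_le[of _ E s v c] by fastforce
next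
  assume "\<forall>Q\<in>paths E s v. path_cost c P \<le> path_cost c Q"
  then have "ereal (path_cost c P) \<le> shortest_dist E c s v"
    unfolding shortest_dist_def by (auto intro: INF_greatest)
  then show "shortest_dist E c s v = ereal (path_cost c P)"
    using shortest_dist_le[OF assms] by (rule antisym[rotated])
qed

lemma shortest_dist_attained:
  assumes "finite E" "paths E s v \<noteq> {}"
  obtains P where "P \<in> paths E s v" "shortest_dist E c s v = ereal (path_cost c P)"
proof -
  obtain P where "P \<in> paths E s v" "\<forall>Q\<in>paths E s v. path_cost c P \<le> path_cost c Q"
    using arg_min_if_finite[OF finite_paths[OF assms(1)] assms(2), of "path_cost c"] by (meson not_le)
  with that show ?thesis by (simp add: shortest_dist_eq_iff)
qed

lemma shortest_dist_eq_infinity_iff: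
  assumes "finite E"
  shows "shortest_dist E c s v = \<infinity> \<longleftrightarrow> paths E s v = {}"
proof
  assume "shortest_dist E c s v = \<infinity>"
  then show "paths E s v = {}"
    using shortest_dist_attained[OF assms, of s v c] by (metis PInfty_neq_ereal(1))
qed (simp add: shortest_dist_def top_ereal_def)

text \<open>A shortest path to \<open>a\<close> either visits \<open>b\<close>, and then its prefix up to \<open>b\<close> is no longer
  (costs are nonnegative), or it can be extended by the edge \<open>(a, b)\<close>.\<close>
lemma shortest_dist_triangle:
  assumes "finite E" and nonneg: "\<forall>e\<in>E. 0 \<le> c e"
    and "paths E s a \<noteq> {}" and ab: "(a, b) \<in> E"
  shows "paths E s b \<noteq> {}" "shortest_dist E c s b \<le> shortest_dist E c s a + ereal (c (a, b))"
proof -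
  obtain P where P: "P \<in> paths E s a" "shortest_dist E c s a = ereal (path_cost c P)"
    using shortest_dist_attained[OF assms(1,3)] by blast
  then obtain vs where p: "path_through E s a P vs" by (auto simp: paths_iff_path_through)
  obtain Q where Q: "Q \<in> paths E s b" "path_cost c Q \<le> path_cost c P + c (a, b)"
  proof (cases "b \<in> set vs")
    case True
    then obtain j where j: "j < length vs" "vs ! j = b" by (metis in_set_conv_nth)
    then have "j \<le> length P" using p unfolding path_through_def by simp
    then have "take j P \<in> paths E s b"
      using path_through_take[OF p] j by (auto simp: paths_iff_path_through)
    moreover have "path_cost c (take j P) \<le> path_cost c P + c (a, b)"
    proof -
      have "0 \<le> path_cost c (drop j P)" "0 \<le> c (a, b)"
        using p nonneg ab unfolding path_through_def by (auto intro!: path_cost_nonneg dest: in_set_dropD)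
      moreover have "path_cost c P = path_cost c (take j P) + path_cost c (drop j P)"
        by (simp flip: path_cost_append)
      ultimately show ?thesis by linarith
    qed
    ultimately show ?thesis by (rule that)
  next
    case False
    then have "P @ [(a, b)] \<in> paths E s b"
      using path_through_snoc[OF p ab] by (auto simp: paths_iff_path_through)
    then show ?thesis by (rule that) (simp add: path_cost_append path_cost_def)
  qed
  then show "paths E s b \<noteq> {}" by blast
  have "shortest_dist E c s b \<le> ereal (path_cost c Q)" by (rule shortest_dist_le[OF Q(1)])
  also have "\<dots> \<le> shortest_dist E c s a + ereal (c (a, b))" using P(2) Q(2) by simp
  finally show "shortest_dist E c s b \<le> shortest_dist E c s a + ereal (c (a, b))" .
qed

lemma shortest_dist_real:
  assumes "finite E" "paths E s v \<noteq> {}"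
  shows "shortest_dist E c s v = ereal (real_of_ereal (shortest_dist E c s v))"
  using shortest_dist_attained[OF assms] by (metis real_of_ereal.simps(1))

definition tight_edges :: "('v \<times> 'v) set \<Rightarrow> (('v \<times> 'v) \<Rightarrow> real) \<Rightarrow> 'v \<Rightarrow> ('v \<times> 'v) set" where
  "tight_edges E c s =
     {e \<in> E. shortest_dist E c s (snd e) = shortest_dist E c s (fst e) + ereal (c e)}"

text \<open>Along a shortest path, the excess of the prefix cost over the distance is
  nonnegative, nondecreasing (triangle inequality) and zero at the end, hence zero throughout.\<close>
lemma shortest_path_tight:
  assumes fin: "finite E" and nonneg: "\<forall>e\<in>E. 0 \<le> c e"
    and p: "path_through E s v P vs" and shortest: "shortest_dist E c s v = ereal (path_cost c P)"
  shows "set P \<subseteq> tight_edges E c s"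
proof -
  define n where "n = length P"
  define d where "d k = real_of_ereal (shortest_dist E c s (vs ! k))" for k
  define excess where "excess k = path_cost c (take k P) - d k" for k
  have prefix: "take k P \<in> paths E s (vs ! k)" if "k \<le> n" for k
    using path_through_take[OF p] that unfolding n_def by (auto simp: paths_iff_path_through)
  have dist: "shortest_dist E c s (vs ! k) = ereal (d k)" if "k \<le> n" for k
    unfolding d_def using shortest_dist_real[OF fin] prefix[OF that] by blast
  have edge: "P ! k = (vs ! k, vs ! Suc k)" "P ! k \<in> E" if "k < n" for k
    using path_through_edge[OF p] that unfolding n_def by auto
  have cost_Suc: "path_cost c (take (Suc k) P) = path_cost c (take k P) + c (P ! k)" if "k < n" for k
    using that unfolding n_def by (simp add: path_cost_def take_Suc_conv_app_nth)
  have step: "d (Suc k) \<le> d k + c (P ! k)" if "k < n" for k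
    using shortest_dist_triangle(2)[OF fin nonneg, of s "vs ! k" "vs ! Suc k"] prefix[of k]
      dist[of k] dist[of "Suc k"] edge[OF that] that by auto
  have excess_mono: "excess k \<le> excess n" if "k \<le> n" for k
    using lift_Suc_mono_le_ivl[of "{..<n}" excess, OF _ that] step cost_Suc
    unfolding excess_def by fastforce
  have excess_nonneg: "0 \<le> excess k" if "k \<le> n" for k
    using shortest_dist_le[OF prefix[OF that], of c] dist[OF that] unfolding excess_def by simp
  have "excess n = 0"
    using dist[of n] shortest path_through_last[OF p] unfolding excess_def n_def by simp
  then have "excess k = 0" if "k \<le> n" for k
    using excess_mono[OF that] excess_nonneg[OF that] by simp
  then have "d (Suc k) = d k + c (P ! k)" if "k < n" for k
    using that cost_Suc[OF that] unfolding excess_def by fastforce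
  then have "P ! k \<in> tight_edges E c s" if "k < n" for k
    using that edge[OF that] dist[of k] dist[of "Suc k"] unfolding tight_edges_def by simp
  then show ?thesis by (metis in_set_conv_nth n_def subsetI)
qed

lemma tight_path_shortest:
  assumes p: "path_through E s v P vs" and tight: "set P \<subseteq> tight_edges E c s"
  shows "shortest_dist E c s v = ereal (path_cost c P)"
proof -
  have "shortest_dist E c s (vs ! k) = ereal (path_cost c (take k P))" if "k \<le> length P" for k
    using that
  proof (induction k)
    case 0
    then show ?case using path_through_first[OF p] by (simp add: shortest_dist_self path_cost_def)
  next
    case (Suc k)
    then have "P ! k \<in> tight_edges E c s" using tight by auto
    then show ?case
      using Suc path_through_edge[OF p, of k]
      by (simp add: tight_edges_def path_cost_def take_Suc_conv_app_nth)
  qed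
  from this[of "length P"] show ?thesis using path_through_last[OF p] by simp
qed

lemma shortest_path_transfer:
  assumes "finite E" "\<forall>e\<in>E. 0 \<le> c1 e" and tight: "tight_edges E c1 s \<subseteq> tight_edges E c2 s"
    and P: "P \<in> paths E s v" and shortest: "\<forall>Q\<in>paths E s v. path_cost c1 P \<le> path_cost c1 Q"
  shows "\<forall>Q\<in>paths E s v. path_cost c2 P \<le> path_cost c2 Q"
proof -
  obtain vs where p: "path_through E s v P vs" using P by (auto simp: paths_iff_path_through)
  have "set P \<subseteq> tight_edges E c1 s"
    using shortest_path_tight[OF assms(1,2) p] shortest shortest_dist_eq_iff[OF P] by blast
  then have "shortest_dist E c2 s v = ereal (path_cost c2 P)"
    using tight by (intro tight_path_shortest[OF p]) blast
  then show ?thesis using shortest_dist_eq_iff[OF P] by blast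
qed

lemma shortest_dist_linear_combination:
  assumes fin: "finite E" and nonneg: "\<forall>e\<in>E. 0 \<le> c1 e"
    and tight: "tight_edges E c1 s \<subseteq> tight_edges E c2 s"
    and uv: "0 \<le> u" "0 \<le> v" and c: "\<forall>e\<in>E. c e = u * c1 e + v * c2 e"
    and d1: "shortest_dist E c1 s w = ereal d1" and d2: "shortest_dist E c2 s w = ereal d2"
  shows "shortest_dist E c s w = ereal (u * d1 + v * d2)"
proof -
  have "paths E s w \<noteq> {}"
    using d1 shortest_dist_eq_infinity_iff[OF fin, of c1 s w] by (metis PInfty_neq_ereal(1))
  then obtain P where P: "P \<in> paths E s w" "shortest_dist E c1 s w = ereal (path_cost c1 P)"
    using shortest_dist_attained[OF fin] by blast
  have shortest1: "\<forall>Q\<in>paths E s w. path_cost c1 P \<le> path_cost c1 Q"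
    using shortest_dist_eq_iff[OF P(1)] P(2) by blast
  then have shortest2: "\<forall>Q\<in>paths E s w. path_cost c2 P \<le> path_cost c2 Q"
    using shortest_path_transfer[OF fin nonneg tight P(1)] by blast
  have combination: "path_cost c Q = u * path_cost c1 Q + v * path_cost c2 Q" if "Q \<in> paths E s w" for Q
    using path_cost_linear_combination[OF paths_subset[OF that] c] .
  have "\<forall>Q\<in>paths E s w. path_cost c P \<le> path_cost c Q"
    using shortest1 shortest2 uv by (simp add: combination P(1) add_mono mult_left_mono)
  then have "shortest_dist E c s w = ereal (path_cost c P)"
    using shortest_dist_eq_iff[OF P(1)] by blast
  moreover have "path_cost c2 P = d2"
    using shortest2 shortest_dist_eq_iff[OF P(1), of c2] d2 by simp
  ultimately show ?thesis using P d1 combination[OF P(1)] by simp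
qed

lemma convex_combination_nonpos_eq_0_iff:
  fixes g1 g2 u v :: real
  assumes "g1 \<le> 0" "g2 \<le> 0" "g1 = 0 \<longleftrightarrow> g2 = 0" "0 \<le> u" "0 \<le> v" "u + v = 1"
  shows "u * g1 + v * g2 = 0 \<longleftrightarrow> g1 = 0"
proof
  assume "u * g1 + v * g2 = 0"
  moreover have "u * g1 \<le> 0" "v * g2 \<le> 0" using assms by (simp_all add: mult_nonneg_nonpos)
  ultimately have "u * g1 = 0" "v * g2 = 0" by linarith+
  then show "g1 = 0" using assms by auto
qed (use assms in simp)

text \<open>A vertex is unreachable for all cost functions alike; for reachable tails the tightness
  gap of the combination is the same combination of the two (nonpositive) gaps.\<close>
lemma tight_edges_convex_combination:
  assumes fin: "finite E" and nonneg1: "\<forall>e\<in>E. 0 \<le> c1 e" and nonneg2: "\<forall>e\<in>E. 0 \<le> c2 e"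
    and tight: "tight_edges E c1 s = tight_edges E c2 s"
    and uv: "0 \<le> u" "0 \<le> v" "u + v = 1" and c: "\<forall>e\<in>E. c e = u * c1 e + v * c2 e"
  shows "tight_edges E c s = tight_edges E c1 s"
proof -
  have "(a, b) \<in> tight_edges E c s \<longleftrightarrow> (a, b) \<in> tight_edges E c1 s" if ab: "(a, b) \<in> E" for a b
  proof (cases "paths E s a = {}")
    case True
    then have "shortest_dist E c' s a = \<infinity>" for c'
      using shortest_dist_eq_infinity_iff[OF fin] by blast
    then show ?thesis
      using ab shortest_dist_eq_infinity_iff[OF fin, of _ s b] by (simp add: tight_edges_def)
  next
    case False
    have reach_b: "paths E s b \<noteq> {}" using shortest_dist_triangle(1)[OF fin nonneg1 False ab] .
    define d1 where "d1 x = real_of_ereal (shortest_dist E c1 s x)" for x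
    define d2 where "d2 x = real_of_ereal (shortest_dist E c2 s x)" for x
    have dist1: "shortest_dist E c1 s x = ereal (d1 x)" if "x \<in> {a, b}" for x
      unfolding d1_def using shortest_dist_real[OF fin] that False reach_b by blast
    have dist2: "shortest_dist E c2 s x = ereal (d2 x)" if "x \<in> {a, b}" for x
      unfolding d2_def using shortest_dist_real[OF fin] that False reach_b by blast
    have dist: "shortest_dist E c s x = ereal (u * d1 x + v * d2 x)" if "x \<in> {a, b}" for x
      using shortest_dist_linear_combination[OF fin nonneg1 _ uv(1,2) c]
        dist1[OF that] dist2[OF that] tight by blast
    define g1 where "g1 = d1 b - d1 a - c1 (a, b)"
    define g2 where "g2 = d2 b - d2 a - c2 (a, b)"
    have "g1 \<le> 0" "g2 \<le> 0"
      using shortest_dist_triangle(2)[OF fin nonneg1 False ab]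
        shortest_dist_triangle(2)[OF fin nonneg2 False ab] dist1 dist2 unfolding g1_def g2_def by auto
    have gap1: "(a, b) \<in> tight_edges E c1 s \<longleftrightarrow> g1 = 0"
      using ab dist1 unfolding tight_edges_def g1_def by auto
    have gap2: "(a, b) \<in> tight_edges E c2 s \<longleftrightarrow> g2 = 0"
      using ab dist2 unfolding tight_edges_def g2_def by auto
    have "(a, b) \<in> tight_edges E c s \<longleftrightarrow> u * g1 + v * g2 = 0"
      using ab dist c unfolding tight_edges_def g1_def g2_def by (auto simp: algebra_simps)
    also have "\<dots> \<longleftrightarrow> g1 = 0"
      using \<open>g1 \<le> 0\<close> \<open>g2 \<le> 0\<close> gap1 gap2 tight uv
      by (intro convex_combination_nonpos_eq_0_iff) auto
    finally show ?thesis using gap1 by blast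
  qed
  then show ?thesis unfolding tight_edges_def by auto
qed

section \<open>Piecewise affine costs\<close>

definition in_piece :: "nat \<Rightarrow> (nat \<Rightarrow> real) \<Rightarrow> real \<Rightarrow> nat \<Rightarrow> bool" where
  "in_piece K \<sigma> y k \<longleftrightarrow> k \<le> K \<and> \<sigma> k \<le> y \<and> (k < K \<longrightarrow> y < \<sigma> (Suc k))"

lemma in_piece_unique:
  assumes mono: "\<And>k. k < K \<Longrightarrow> \<sigma> k < \<sigma> (Suc k)"
    and "in_piece K \<sigma> y i" "in_piece K \<sigma> y j"
  shows "i = j"
proof -
  have "\<not> i < j" if "in_piece K \<sigma> y i" "in_piece K \<sigma> y j" for i j
  proof
    assume "i < j"
    then have "\<sigma> (Suc i) \<le> \<sigma> j"
      using that lift_Suc_mono_le_ivl[of "{..<K}" \<sigma> "Suc i" j] mono unfolding in_piece_def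
      by (fastforce intro: less_imp_le)
    then show False using \<open>i < j\<close> that unfolding in_piece_def by auto
  qed
  then show ?thesis using assms(2,3) by (meson linorder_neqE_nat)
qed

lemma in_piece_exists:
  assumes "\<sigma> 0 \<le> y"
  obtains k where "in_piece K \<sigma> y k"
proof -
  define A where "A = {k. k \<le> K \<and> \<sigma> k \<le> y}"
  define k where "k = Max A"
  have "finite A" "0 \<in> A" using assms unfolding A_def by auto
  then have "k \<in> A" "\<And>j. j \<in> A \<Longrightarrow> j \<le> k" unfolding k_def using Max_in by auto
  then have "k \<le> K" "\<sigma> k \<le> y" "\<And>j. j \<le> K \<Longrightarrow> \<sigma> j \<le> y \<Longrightarrow> j \<le> k"
    unfolding A_def by auto
  then have "in_piece K \<sigma> y k" unfolding in_piece_def by (meson Suc_leI not_le not_less_eq_eq)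
  then show ?thesis by (rule that)
qed

lemma in_piece_convex_combination:
  assumes "in_piece K \<sigma> y1 k" "in_piece K \<sigma> y2 k" "0 \<le> u" "0 \<le> v" "u + v = 1"
  shows "in_piece K \<sigma> (u * y1 + v * y2) k"
proof -
  have "{y. in_piece K \<sigma> y k} =
        (if k \<le> K then if k < K then {\<sigma> k..<\<sigma> (Suc k)} else {\<sigma> k..} else {})"
    unfolding in_piece_def by auto
  then have "convex {y. in_piece K \<sigma> y k}" by (simp add: convex_real_interval)
  from convexD[OF this, of y1 y2 u v] show ?thesis using assms by simp
qed

lemma piece_eq_iff:
  assumes "brk N e 0 = 0" "\<And>k. k < npieces N \<Longrightarrow> brk N e k < brk N e (Suc k)" "0 \<le> y"
  shows "piece N e y = k \<longleftrightarrow> in_piece (npieces N) (brk N e) y k"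
proof -
  obtain j where j: "in_piece (npieces N) (brk N e) y j"
    using in_piece_exists[of "brk N e" y] assms by auto
  then have "piece N e y = j"
    unfolding piece_def in_piece_def[symmetric] using in_piece_unique[OF assms(2) j] by blast
  then show ?thesis using in_piece_unique[OF assms(2) j] j by blast
qed

lemma cost_convex_combination:
  assumes "piece N e y1 = k" "piece N e y2 = k" "piece N e (u * y1 + v * y2) = k" "u + v = 1"
  shows "cost N (u * lam1 + v * lam2) e (u * y1 + v * y2) =
         u * cost N lam1 e y1 + v * cost N lam2 e y2"
proof -
  have "offs N e k = u * offs N e k + v * offs N e k" using assms(4) by (metis distrib_right mult_1)
  then show ?thesis using assms(1-3) unfolding cost_def Let_def by (simp add: algebra_simps)
qed

section \<open>Convex combinations of Wardrop equilibria\<close>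

definition shortest_path_flow ::
    "('v \<times> 'v) set \<Rightarrow> 'v \<Rightarrow> 'v \<Rightarrow> (('v \<times> 'v) \<Rightarrow> real) \<Rightarrow> (('v \<times> 'v) \<Rightarrow> real) \<Rightarrow> bool" where
  "shortest_path_flow E s t c y \<longleftrightarrow> (\<exists>f.
     (\<forall>P\<in>paths E s t. 0 \<le> f P) \<and>
     (\<forall>e\<in>E. y e = (\<Sum>P\<in>paths E s t. if e \<in> set P then f P else 0)) \<and>
     (\<forall>P\<in>paths E s t. 0 < f P \<longrightarrow> (\<forall>Q\<in>paths E s t. path_cost c P \<le> path_cost c Q)))"

lemma wardrop_iff_shortest_path_flows:
  "wardrop N lam x \<longleftrightarrow> feasible N x \<and>
     (\<forall>i\<in>comms N. shortest_path_flow (edges N) (src N i) (snk N i)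
                      (\<lambda>e. cost N lam e (load N x e)) (x i))"
  unfolding wardrop_def shortest_path_flow_def by auto

lemma shortest_path_flow_cong:
  assumes "\<forall>e\<in>E. c e = c' e"
  shows "shortest_path_flow E s t c y \<longleftrightarrow> shortest_path_flow E s t c' y"
proof -
  have "path_cost c P = path_cost c' P" if "P \<in> paths E s t" for P
    using paths_subset[OF that] assms unfolding path_cost_def by (metis map_eq_conv subsetD)
  then show ?thesis unfolding shortest_path_flow_def by simp
qed

text \<open>A path carrying flow in either summand is shortest for both cost functions, because
  their tight edges coincide, and hence shortest for their combination.\<close>
lemma shortest_path_flow_convex_combination:
  assumes fin: "finite E" and nonneg1: "\<forall>e\<in>E. 0 \<le> c1 e" and nonneg2: "\<forall>e\<in>E. 0 \<le> c2 e"
    and tight: "tight_edges E c1 s = tight_edges E c2 s"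
    and uv: "0 \<le> u" "0 \<le> v" and c: "\<forall>e\<in>E. c e = u * c1 e + v * c2 e"
    and y1: "shortest_path_flow E s t c1 y1" and y2: "shortest_path_flow E s t c2 y2"
  shows "shortest_path_flow E s t c (\<lambda>e. u * y1 e + v * y2 e)"
proof -
  let ?Ps = "paths E s t"
  let ?shortest = "\<lambda>c P. \<forall>Q\<in>?Ps. path_cost c P \<le> path_cost c Q"
  obtain f1 where f1: "\<forall>P\<in>?Ps. 0 \<le> f1 P" "\<forall>e\<in>E. y1 e = (\<Sum>P\<in>?Ps. if e \<in> set P then f1 P else 0)"
      "\<forall>P\<in>?Ps. 0 < f1 P \<longrightarrow> ?shortest c1 P"
    using y1 unfolding shortest_path_flow_def by blast
  obtain f2 where f2: "\<forall>P\<in>?Ps. 0 \<le> f2 P" "\<forall>e\<in>E. y2 e = (\<Sum>P\<in>?Ps. if e \<in> set P then f2 P else 0)"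
      "\<forall>P\<in>?Ps. 0 < f2 P \<longrightarrow> ?shortest c2 P"
    using y2 unfolding shortest_path_flow_def by blast
  define f where "f P = u * f1 P + v * f2 P" for P
  have "\<forall>P\<in>?Ps. 0 \<le> f P" using f1(1) f2(1) uv unfolding f_def by simp
  moreover have "\<forall>e\<in>E. u * y1 e + v * y2 e = (\<Sum>P\<in>?Ps. if e \<in> set P then f P else 0)"
  proof
    fix e assume "e \<in> E"
    have "(if e \<in> set P then f P else 0)
          = u * (if e \<in> set P then f1 P else 0) + v * (if e \<in> set P then f2 P else 0)" for P
      by (simp add: f_def)
    then show "u * y1 e + v * y2 e = (\<Sum>P\<in>?Ps. if e \<in> set P then f P else 0)"
      using f1(2) f2(2) \<open>e \<in> E\<close> by (simp add: sum.distrib sum_distrib_left)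
  qed
  moreover have "?shortest c P" if P: "P \<in> ?Ps" "0 < f P" for P
  proof -
    have "0 < f1 P \<or> 0 < f2 P"
      using P f1(1) f2(1) uv unfolding f_def
      by (metis add.right_neutral mult_zero_right not_less order.antisym)
    then have "?shortest c1 P \<and> ?shortest c2 P"
      using f1(3) f2(3) P(1) shortest_path_transfer[OF fin] nonneg1 nonneg2 tight by (metis order_refl)
    then show ?thesis
      using uv path_cost_linear_combination[OF paths_subset c] P(1)
      by (simp add: add_mono mult_left_mono)
  qed
  ultimately show ?thesis unfolding shortest_path_flow_def by blast
qed

lemma load_linear_combination:
  "load N (\<lambda>i e. u * x i e + v * y i e) e = u * load N x e + v * load N y e"
  unfolding load_def by (simp add: sum.distrib sum_distrib_left)

lemma load_nonneg: "feasible N x \<Longrightarrow> e \<in> edges N \<Longrightarrow> 0 \<le> load N x e"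
  unfolding feasible_def load_def by (auto intro: sum_nonneg)

lemma feasible_convex_combination:
  assumes "feasible N x" "feasible N y" "0 \<le> u" "0 \<le> v" "u + v = 1"
  shows "feasible N (\<lambda>i e. u * x i e + v * y i e)"
proof -
  have "(\<Sum>e\<in>A. u * x i e + v * y i e) - (\<Sum>e\<in>B. u * x i e + v * y i e)
        = u * ((\<Sum>e\<in>A. x i e) - (\<Sum>e\<in>B. x i e)) + v * ((\<Sum>e\<in>A. y i e) - (\<Sum>e\<in>B. y i e))"
    for A B i by (simp add: sum.distrib sum_distrib_left algebra_simps)
  moreover have "u * r + v * r = r" for r using assms(5) by (metis distrib_right mult_1)
  ultimately show ?thesis using assms unfolding feasible_def by simp
qed

definition equilibrium_cost :: "('v, 'i) network \<Rightarrow> real \<Rightarrow> ('v \<times> 'v) \<Rightarrow> real" where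
  "equilibrium_cost N lam e = cost N lam e (eq_load N lam e)"

lemma active_support_eq_tight_edges:
  "active_support N lam =
     {(i, e). i \<in> comms N \<and> e \<in> tight_edges (edges N) (equilibrium_cost N lam) (src N i)}"
  unfolding active_support_def tight_edges_def phi_def shortest_dist_def equilibrium_cost_def by auto

lemma tight_edges_eq_if_active_support_eq:
  assumes "active_support N a = active_support N b" "i \<in> comms N"
  shows "tight_edges (edges N) (equilibrium_cost N a) (src N i) =
         tight_edges (edges N) (equilibrium_cost N b) (src N i)"
  using assms unfolding active_support_eq_tight_edges set_eq_iff by auto

locale piecewise_affine_network =
  fixes N :: "('v, 'i) network"
  assumes finite_edges: "finite (edges N)"
    and brk_zero: "e \<in> edges N \<Longrightarrow> brk N e 0 = 0"
    and brk_strict_mono: "e \<in> edges N \<Longrightarrow> k < npieces N \<Longrightarrow> brk N e k < brk N e (Suc k)"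
    and slope_nonneg: "e \<in> edges N \<Longrightarrow> k \<le> npieces N \<Longrightarrow> 0 \<le> slope N e k"
    and offs_nonneg: "e \<in> edges N \<Longrightarrow> k \<le> npieces N \<Longrightarrow> 0 \<le> offs N e k"
    and pcoef_nonneg: "e \<in> edges N \<Longrightarrow> 0 \<le> pcoef N e"
    and wardrop_exists: "0 \<le> lam \<Longrightarrow> \<exists>x. wardrop N lam x"
    and wardrop_loads_unique:
      "0 \<le> lam \<Longrightarrow> wardrop N lam x \<Longrightarrow> wardrop N lam y \<Longrightarrow> e \<in> edges N \<Longrightarrow> load N x e = load N y e"
begin

lemma piece_eq_iff_in_piece:
  "e \<in> edges N \<Longrightarrow> 0 \<le> y \<Longrightarrow> piece N e y = k \<longleftrightarrow> in_piece (npieces N) (brk N e) y k"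
  by (intro piece_eq_iff brk_zero brk_strict_mono)

lemma piece_convex_combination:
  assumes "e \<in> edges N" "0 \<le> y1" "0 \<le> y2" "piece N e y1 = piece N e y2"
    and "0 \<le> u" "0 \<le> v" "u + v = 1"
  shows "piece N e (u * y1 + v * y2) = piece N e y1"
proof -
  define k where "k = piece N e y1"
  have "in_piece (npieces N) (brk N e) y1 k" "in_piece (npieces N) (brk N e) y2 k"
    using assms piece_eq_iff_in_piece unfolding k_def by metis+
  then have "in_piece (npieces N) (brk N e) (u * y1 + v * y2) k"
    using assms(5-7) by (rule in_piece_convex_combination)
  moreover have "0 \<le> u * y1 + v * y2" using assms by simp
  ultimately show ?thesis using piece_eq_iff_in_piece[OF assms(1)] unfolding k_def by blast
qed

lemma cost_nonneg:
  assumes "e \<in> edges N" "0 \<le> lam" "0 \<le> y"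
  shows "0 \<le> cost N lam e y"
proof -
  have "piece N e y \<le> npieces N"
    using piece_eq_iff_in_piece[OF assms(1,3)] unfolding in_piece_def by blast
  then show ?thesis
    using assms slope_nonneg offs_nonneg pcoef_nonneg unfolding cost_def Let_def by simp
qed

lemma eq_load_wardrop:
  assumes "0 \<le> lam" "wardrop N lam x" "e \<in> edges N"
  shows "eq_load N lam e = load N x e"
  unfolding eq_load_def
  using wardrop_loads_unique[OF assms(1) someI_ex[OF wardrop_exists[OF assms(1)]] assms(2,3)] .

lemma equilibrium_cost_nonneg:
  assumes "0 \<le> lam" "e \<in> edges N"
  shows "0 \<le> equilibrium_cost N lam e"
proof -
  obtain x where x: "wardrop N lam x" using wardrop_exists[OF assms(1)] by blast
  then have "feasible N x" unfolding wardrop_def by blast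
  then have "0 \<le> eq_load N lam e"
    using eq_load_wardrop[OF assms(1) x assms(2)] load_nonneg assms(2) by simp
  then show ?thesis using cost_nonneg assms unfolding equilibrium_cost_def by blast
qed

text \<open>Equal active parts put both equilibrium loads on the same affine piece of each edge cost,
  where cost is affine jointly in price and load.\<close>
lemma equilibria_convex_combination_cost:
  assumes "0 \<le> a" "0 \<le> b" "0 \<le> u" "0 \<le> v" "u + v = 1"
    and parts: "active_parts N a = active_parts N b"
    and xa: "wardrop N a xa" and xb: "wardrop N b xb" and e: "e \<in> edges N"
  defines "x \<equiv> \<lambda>i e. u * xa i e + v * xb i e"
  shows "piece N e (load N x e) = piece N e (eq_load N a e)"
    and "cost N (u * a + v * b) e (load N x e) = u * equilibrium_cost N a e + v * equilibrium_cost N b e"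
proof -
  have load: "load N x e = u * eq_load N a e + v * eq_load N b e"
    using eq_load_wardrop assms unfolding x_def load_linear_combination by simp
  have "feasible N xa" "feasible N xb" using xa xb unfolding wardrop_def by blast+
  then have nonneg: "0 \<le> eq_load N a e" "0 \<le> eq_load N b e"
    using eq_load_wardrop[OF _ xa e] eq_load_wardrop[OF _ xb e] load_nonneg e assms(1,2) by simp_all
  have same: "piece N e (eq_load N a e) = piece N e (eq_load N b e)"
    using fun_cong[OF parts, of e] e unfolding active_parts_def by simp
  show piece: "piece N e (load N x e) = piece N e (eq_load N a e)"
    unfolding load using piece_convex_combination[OF e nonneg same] assms by blast
  show "cost N (u * a + v * b) e (load N x e) = u * equilibrium_cost N a e + v * equilibrium_cost N b e"
    unfolding equilibrium_cost_def load
    using cost_convex_combination[OF refl same[symmetric]] piece[unfolded load] \<open>u + v = 1\<close> by simp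
qed

lemma wardrop_convex_combination:
  assumes ab: "0 \<le> a" "0 \<le> b" and uv: "0 \<le> u" "0 \<le> v" "u + v = 1"
    and state: "edge_state N a = edge_state N b"
    and xa: "wardrop N a xa" and xb: "wardrop N b xb"
  shows "wardrop N (u * a + v * b) (\<lambda>i e. u * xa i e + v * xb i e)"
  unfolding wardrop_iff_shortest_path_flows
proof (intro conjI ballI)
  show "feasible N (\<lambda>i e. u * xa i e + v * xb i e)"
    using xa xb uv unfolding wardrop_def by (blast intro: feasible_convex_combination)
next
  fix i assume i: "i \<in> comms N"
  have flow: "shortest_path_flow (edges N) (src N i) (snk N i) (equilibrium_cost N lam) (y i)"
    if "0 \<le> lam" "wardrop N lam y" for lam y
  proof -
    have "\<forall>e\<in>edges N. cost N lam e (load N y e) = equilibrium_cost N lam e"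
      using eq_load_wardrop[OF that] unfolding equilibrium_cost_def by simp
    moreover have "shortest_path_flow (edges N) (src N i) (snk N i) (\<lambda>e. cost N lam e (load N y e)) (y i)"
      using that(2) i unfolding wardrop_iff_shortest_path_flows by blast
    ultimately show ?thesis by (rule shortest_path_flow_cong[THEN iffD1])
  qed
  have "active_parts N a = active_parts N b" "active_support N a = active_support N b"
    using state unfolding edge_state_def by simp_all
  then have cost: "\<forall>e\<in>edges N. cost N (u * a + v * b) e (load N (\<lambda>i e. u * xa i e + v * xb i e) e)
                     = u * equilibrium_cost N a e + v * equilibrium_cost N b e"
    and tight: "tight_edges (edges N) (equilibrium_cost N a) (src N i) =
                tight_edges (edges N) (equilibrium_cost N b) (src N i)"
    using equilibria_convex_combination_cost(2)[OF ab uv _ xa xb]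
      tight_edges_eq_if_active_support_eq[OF _ i] by blast+
  have "\<forall>e\<in>edges N. 0 \<le> equilibrium_cost N a e" "\<forall>e\<in>edges N. 0 \<le> equilibrium_cost N b e"
    using equilibrium_cost_nonneg ab by blast+
  from shortest_path_flow_convex_combination[OF finite_edges this tight uv(1,2) cost
      flow[OF ab(1) xa] flow[OF ab(2) xb]]
  show "shortest_path_flow (edges N) (src N i) (snk N i)
      (\<lambda>e. cost N (u * a + v * b) e (load N (\<lambda>i e. u * xa i e + v * xb i e) e)) (\<lambda>e. u * xa i e + v * xb i e)" .
qed


theorem convex_edge_state_region: "convex {lam. 0 \<le> lam \<and> edge_state N lam = \<sigma>}"
proof (rule convexI)
  fix a b u v :: real
  assume "a \<in> {lam. 0 \<le> lam \<and> edge_state N lam = \<sigma>}" "b \<in> {lam. 0 \<le> lam \<and> edge_state N lam = \<sigma>}"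
    and uv: "0 \<le> u" "0 \<le> v" "u + v = 1"
  then have ab: "0 \<le> a" "0 \<le> b" and state: "edge_state N a = \<sigma>" "edge_state N b = \<sigma>" by auto
  then have parts: "active_parts N a = active_parts N b"
    and support: "active_support N a = active_support N b" unfolding edge_state_def by auto
  obtain xa xb where xa: "wardrop N a xa" and xb: "wardrop N b xb"
    using wardrop_exists[OF ab(1)] wardrop_exists[OF ab(2)] by blast
  define lam where "lam = u * a + v * b"
  define x where "x = (\<lambda>i e. u * xa i e + v * xb i e)"
  have lam: "0 \<le> lam" using ab uv unfolding lam_def by simp
  have x: "wardrop N lam x"
    unfolding lam_def x_def using wardrop_convex_combination[OF ab uv _ xa xb] state by simp
  note combination = equilibria_convex_combination_cost[OF ab uv parts xa xb, folded lam_def x_def]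
  have "active_parts N lam = active_parts N a"
  proof
    fix e show "active_parts N lam e = active_parts N a e"
      using combination(1) eq_load_wardrop[OF lam x] unfolding active_parts_def by simp
  qed
  moreover have "active_support N lam = active_support N a"
  proof -
    have cost: "\<forall>e\<in>edges N. equilibrium_cost N lam e = u * equilibrium_cost N a e + v * equilibrium_cost N b e"
      using combination(2) eq_load_wardrop[OF lam x] unfolding equilibrium_cost_def by simp
    have nonneg: "\<forall>e\<in>edges N. 0 \<le> equilibrium_cost N a e" "\<forall>e\<in>edges N. 0 \<le> equilibrium_cost N b e"
      using equilibrium_cost_nonneg ab by blast+
    have "tight_edges (edges N) (equilibrium_cost N lam) (src N i) =
          tight_edges (edges N) (equilibrium_cost N a) (src N i)" if "i \<in> comms N" for i
      using tight_edges_convex_combination[OF finite_edges nonneg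
          tight_edges_eq_if_active_support_eq[OF support that] uv cost] .
    then show ?thesis unfolding active_support_eq_tight_edges by auto
  qed
  ultimately show "u *\<^sub>R a + v *\<^sub>R b \<in> {lam. 0 \<le> lam \<and> edge_state N lam = \<sigma>}"
    using lam state unfolding lam_def edge_state_def by simp
qed

end

theorem lemma5p4:
  fixes N :: "('v, 'i) network"
    and S :: "('i \<times> ('v \<times> 'v)) set"
    and l :: "('v \<times> 'v) \<Rightarrow> nat"
  assumes fin_V: "finite (verts N)"
    and E_sub: "edges N \<subseteq> verts N \<times> verts N"
    and fin_I: "finite (comms N)"
    and terminals: "\<forall>i\<in>comms N. src N i \<in> verts N \<and> snk N i \<in> verts N \<and> dem N i > 0"
    and brk0: "\<forall>e\<in>edges N. brk N e 0 = 0"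
    and brk_mono: "\<forall>e\<in>edges N. \<forall>k < npieces N. brk N e k < brk N e (Suc k)"
    and slope_pos: "\<forall>e\<in>edges N. \<forall>k \<le> npieces N. slope N e k > 0"
    and offs_nonneg: "\<forall>e\<in>edges N. \<forall>k \<le> npieces N. offs N e k \<ge> 0"
    and pcoef_nonneg: "\<forall>e\<in>edges N. pcoef N e \<ge> 0"
    and cost_cont: "\<forall>lam \<ge> 0. \<forall>e\<in>edges N. continuous_on {0..} (cost N lam e)"
    and cost_mono: "\<forall>lam \<ge> 0. \<forall>e\<in>edges N. strict_mono_on {0..} (cost N lam e)"
    and WE_exists: "\<forall>lam \<ge> 0. \<exists>x. wardrop N lam x"
    and WE_loads_unique: "\<forall>lam \<ge> 0. \<forall>x y. wardrop N lam x \<longrightarrow> wardrop N lam y \<longrightarrow>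
                             (\<forall>e\<in>edges N. load N x e = load N y e)"
    and S_sub: "S \<subseteq> comms N \<times> edges N"
    and l_range: "\<forall>e\<in>edges N. l e \<le> npieces N"
  shows "convex {lam :: real. lam \<ge> 0 \<and> edge_state N lam = (S, l)}"
proof -
  have "finite (edges N)" using fin_V E_sub by (meson finite_SigmaI finite_subset)
  then interpret piecewise_affine_network N
  proof unfold_locales
    fix e k assume e: "e \<in> edges N"
    show "brk N e 0 = 0" using brk0 e by blast
    show "k < npieces N \<Longrightarrow> brk N e k < brk N e (Suc k)" using brk_mono e by blast
    show "k \<le> npieces N \<Longrightarrow> 0 \<le> slope N e k" using slope_pos e by (simp add: less_imp_le)
    show "k \<le> npieces N \<Longrightarrow> 0 \<le> offs N e k" using offs_nonneg e by blast
    show "0 \<le> pcoef N e" using pcoef_nonneg e by blast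
  next
    fix lam :: real assume "0 \<le> lam"
    then show "\<exists>x. wardrop N lam x" using WE_exists by blast
    fix x y e assume "wardrop N lam x" "wardrop N lam y" "e \<in> edges N"
    then show "load N x e = load N y e" using WE_loads_unique \<open>0 \<le> lam\<close> by blast
  qed
  show ?thesis by (rule convex_edge_state_region)
qed

end
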